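(* Let $\mu,\gamma>0$ and let $\widehat\tau$ be the killing time of a reflecting Ornstein–Uhlenbeck process on $[0,\infty)$ with drift $-\mu x$ and unit variance, killed at rate $\gamma\widehat Z$. Then $\mathbb E_x[\widehat\tau^2]<\infty$ for all $x\ge0$.
   Context: $\widehat Z=(\widehat Z_t)_{t\ge0}$ is the diffusion on $[0,\infty)$ with generator $\frac12f''(x)-\mu xf'(x)$ on $C_b^2$ functions with $f'(0+)=0$, started at $x$ under $\mathbb P_x$ (expectation $\mathbb E_x$). With $\xi$ an independent exponential random variable of rate $1$, $\widehat\tau=\inf\{t>0:\gamma\int_0^t\widehat Z_s\,ds\ge\xi\}$. *)

theory Defs
  imports "HOL-Probability.Probability"
begin

definition Cb2_neumann :: "(real \<Rightarrow> real) \<Rightarrow> (real \<Rightarrow> real) \<Rightarrow> (real \<Rightarrow> real) \<Rightarrow> bool" where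
  "Cb2_neumann f f' f'' \<longleftrightarrow>
     (\<forall>y\<ge>0. (f has_real_derivative f' y) (at y within {0..}) \<and>
             (f' has_real_derivative f'' y) (at y within {0..})) \<and>
     continuous_on {0..} f'' \<and>
     bounded (f ` {0..}) \<and> bounded (f' ` {0..}) \<and> bounded (f'' ` {0..}) \<and>
     f' 0 = 0"

definition OU_gen :: "real \<Rightarrow> (real \<Rightarrow> real) \<Rightarrow> (real \<Rightarrow> real) \<Rightarrow> real \<Rightarrow> real" where
  "OU_gen \<mu> f' f'' y = f'' y / 2 - \<mu> * y * f' y"

definition filtration_on :: "'a measure \<Rightarrow> (real \<Rightarrow> 'a measure) \<Rightarrow> bool" where
  "filtration_on M F \<longleftrightarrow>
     (\<forall>t\<ge>0. sigma_finite_subalgebra M (F t)) \<and>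
     (\<forall>s t. 0 \<le> s \<longrightarrow> s \<le> t \<longrightarrow> sets (F s) \<subseteq> sets (F t))"

text \<open>Z is a (continuous, [0,oo)-valued, adapted) solution of the martingale problem
  for the reflecting OU generator with drift -mu x, started at x:
  for every f in the domain, f(Z_t) - f(Z_0) - int_0^t Lf(Z_s) ds is an F-martingale.\<close>
definition reflecting_OU :: "'a measure \<Rightarrow> (real \<Rightarrow> 'a measure) \<Rightarrow> real \<Rightarrow> real \<Rightarrow> (real \<Rightarrow> 'a \<Rightarrow> real) \<Rightarrow> bool" where
  "reflecting_OU M F \<mu> x Z \<longleftrightarrow>
     filtration_on M F \<and>
     (\<forall>t\<ge>0. Z t \<in> borel_measurable (F t)) \<and>
     (\<forall>\<omega>\<in>space M. continuous_on {0..} (\<lambda>t. Z t \<omega>) \<and> (\<forall>t\<ge>0. Z t \<omega> \<ge> 0)) \<and>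
     (AE \<omega> in M. Z 0 \<omega> = x) \<and>
     (\<forall>f f' f''. Cb2_neumann f f' f'' \<longrightarrow>
        (let Mf = (\<lambda>t \<omega>. f (Z t \<omega>) - f (Z 0 \<omega>) - integral {0..t} (\<lambda>s. OU_gen \<mu> f' f'' (Z s \<omega>)))
         in \<forall>t\<ge>0. integrable M (Mf t) \<and>
              (\<forall>s. 0 \<le> s \<longrightarrow> s \<le> t \<longrightarrow> (AE \<omega> in M. real_cond_exp M (F s) (Mf t) \<omega> = Mf s \<omega>))))"

text \<open>Killing time: inf{t>0 : gamma * int_0^t Z_s ds >= xi}, with inf {} = oo.\<close>
definition kill_time :: "real \<Rightarrow> (real \<Rightarrow> 'a \<Rightarrow> real) \<Rightarrow> ('a \<Rightarrow> real) \<Rightarrow> 'a \<Rightarrow> ennreal" where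
  "kill_time \<gamma> Z \<xi> \<omega> =
     Inf (ennreal ` {t. t > 0 \<and> \<gamma> * integral {0..t} (\<lambda>s. Z s \<omega>) \<ge> \<xi> \<omega>})"

end

theory Submission
  imports Defs
begin

text \<open>Apply the martingale problem to \<open>f y = 1 - exp (- y\<^sup>2)\<close>. Its compensator
  \<open>C t = \<integral>\<^sub>0\<^sup>t (1 - L f)(Z s) ds = t - f (Z t) + f (Z 0) + martingale\<close> has increments in
  \<open>[0, K (t - s)]\<close> with \<open>K = 3 + 2\<mu>\<close> and, as \<open>0 \<le> f \<le> 1\<close>, conditional mean increment at
  least \<open>t - s - 1\<close>. Hence \<open>E exp (- \<lambda> C (2n)) \<le> \<rho>\<^sup>n\<close> for suitable \<open>\<lambda> > 0\<close> and \<open>\<rho> < 1\<close>.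
  Since \<open>1 - L f y \<le> K y\<close>, the event \<open>\<tau> > 2n\<close> forces either \<open>\<xi> > \<gamma> a n\<close> or
  \<open>C (2n) \<le> K a n\<close>; both have geometrically small probability, so \<open>\<tau>\<close> has a finite
  second moment.\<close>

lemma exp_neg_le_quadratic:
  fixes u :: real
  assumes "0 \<le> u"
  shows "exp (- u) \<le> 1 - u + u\<^sup>2 / 2"
proof -
  define g where "g v = 1 - v + v\<^sup>2 / 2 - exp (- v)" for v :: real
  have "(g has_real_derivative (exp (- v) - (1 - v))) (at v)" for v
    unfolding g_def by (auto intro!: derivative_eq_intros simp: power2_eq_square)
  moreover have "0 \<le> exp (- v) - (1 - v)" for v :: real
    using exp_ge_add_one_self[of "- v"] by linarith
  ultimately have "g 0 \<le> g u"
    by (intro DERIV_nonneg_imp_nondecreasing[OF assms]) blast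
  then show ?thesis by (simp add: g_def)
qed

lemma sq_mult_exp_neg_sq_le_1: "y\<^sup>2 * exp (- y\<^sup>2) \<le> (1::real)"
proof -
  have "y\<^sup>2 \<le> exp (y\<^sup>2)"
    using exp_ge_add_one_self[of "y\<^sup>2"] by linarith
  then show ?thesis by (simp add: exp_minus field_simps)
qed

lemma abs_mult_exp_neg_sq_le_1: "\<bar>y\<bar> * exp (- y\<^sup>2) \<le> (1::real)"
proof -
  have "\<bar>y\<bar> \<le> 1 + y\<^sup>2"
  proof (cases "\<bar>y\<bar> \<le> 1")
    case False
    then have "\<bar>y\<bar> * 1 \<le> \<bar>y\<bar> * \<bar>y\<bar>"
      by (intro mult_left_mono) auto
    then show ?thesis by (simp add: power2_eq_square)
  qed (simp add: add_increasing2)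
  also have "\<dots> \<le> exp (y\<^sup>2)" by (rule exp_ge_add_one_self)
  finally show ?thesis by (simp add: exp_minus field_simps)
qed

lemma summable_odd_mult_geometric:
  fixes r :: real
  assumes "0 \<le> r" "r < 1"
  shows "summable (\<lambda>n. (2 * real n + 1) * r ^ n)"
proof (rule summable_comparison_test')
  have "summable (\<lambda>n. diffs (\<lambda>_. 1::real) n * r ^ n)"
    by (rule termdiff_converges[where K = 1]) (use assms in \<open>auto intro: summable_geometric\<close>)
  then show "summable (\<lambda>n. 2 * (real (Suc n) * r ^ n))"
    by (intro summable_mult) (simp add: diffs_def)
  show "norm ((2 * real n + 1) * r ^ n) \<le> 2 * (real (Suc n) * r ^ n)" for n
    using assms by (simp add: algebra_simps mult_right_mono)
qed

lemma sum_odd_eq_square: "(\<Sum>n<k. 2 * real n + 1) = (real k)\<^sup>2"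
  by (induction k) (auto simp: power2_eq_square algebra_simps)

definition bump :: "real \<Rightarrow> real" where "bump y = 1 - exp (- y\<^sup>2)"
definition bump' :: "real \<Rightarrow> real" where "bump' y = 2 * y * exp (- y\<^sup>2)"
definition bump'' :: "real \<Rightarrow> real" where "bump'' y = (2 - 4 * y\<^sup>2) * exp (- y\<^sup>2)"

lemma bump_measurable [measurable]: "bump \<in> borel_measurable borel"
  unfolding bump_def by measurable

lemma bump_bounds: "0 \<le> bump y" "bump y \<le> 1"
  unfolding bump_def by auto

lemma Cb2_neumann_bump: "Cb2_neumann bump bump' bump''"
  unfolding Cb2_neumann_def
proof (intro conjI allI impI)
  fix y :: real
  show "(bump has_real_derivative bump' y) (at y within {0..})"
    unfolding bump_def bump'_def
    by (auto intro!: derivative_eq_intros simp: field_simps power2_eq_square)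
  show "(bump' has_real_derivative bump'' y) (at y within {0..})"
    unfolding bump'_def bump''_def
    by (auto intro!: derivative_eq_intros simp: field_simps power2_eq_square)
next
  show "continuous_on {0..} bump''"
    unfolding bump''_def by (intro continuous_intros)
  show "bounded (bump ` {0..})"
    using bump_bounds by (intro boundedI[where B = 1]) auto
  have "\<bar>bump' y\<bar> \<le> 2" for y
    using abs_mult_exp_neg_sq_le_1[of y] by (simp add: bump'_def abs_mult)
  then show "bounded (bump' ` {0..})"
    by (intro boundedI[where B = 2]) auto
  have "\<bar>bump'' y\<bar> \<le> 6" for y
  proof -
    have "\<bar>bump'' y\<bar> \<le> 2 * exp (- y\<^sup>2) + 4 * (y\<^sup>2 * exp (- y\<^sup>2))"
      unfolding bump''_def
      by (auto simp: abs_mult left_diff_distrib intro!: order_trans[OF abs_triangle_ineq4])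
    moreover have "exp (- y\<^sup>2) \<le> 1" by simp
    ultimately show ?thesis
      using sq_mult_exp_neg_sq_le_1[of y] by linarith
  qed
  then show "bounded (bump'' ` {0..})"
    by (intro boundedI[where B = 6]) auto
  show "bump' 0 = 0"
    by (simp add: bump'_def)
qed

lemma one_minus_OU_gen_bump:
  "1 - OU_gen \<mu> bump' bump'' y = bump y + (2 + 2 * \<mu>) * (y\<^sup>2 * exp (- y\<^sup>2))"
  unfolding OU_gen_def bump_def bump'_def bump''_def
  by (simp add: field_simps power2_eq_square)

lemma continuous_on_OU_gen_bump: "continuous_on S (OU_gen \<mu> bump' bump'')"
  unfolding OU_gen_def bump'_def bump''_def by (intro continuous_intros) auto

lemma one_minus_OU_gen_bump_bounds:
  fixes \<mu> y :: real
  assumes "0 \<le> \<mu>" "0 \<le> y"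
  shows "0 \<le> 1 - OU_gen \<mu> bump' bump'' y"
    and "1 - OU_gen \<mu> bump' bump'' y \<le> 3 + 2 * \<mu>"
    and "1 - OU_gen \<mu> bump' bump'' y \<le> (3 + 2 * \<mu>) * y"
proof -
  let ?e = "y\<^sup>2 * exp (- y\<^sup>2)"
  have e: "0 \<le> ?e" "?e \<le> 1" "?e \<le> y\<^sup>2"
    using sq_mult_exp_neg_sq_le_1[of y] by (auto intro: mult_left_le)
  have b: "bump y \<le> y\<^sup>2"
    using exp_ge_add_one_self[of "- y\<^sup>2"] by (simp add: bump_def)
  have c: "0 \<le> (2 + 2 * \<mu>) * ?e" "(2 + 2 * \<mu>) * ?e \<le> 2 + 2 * \<mu>"
    "(2 + 2 * \<mu>) * ?e \<le> (2 + 2 * \<mu>) * y\<^sup>2"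
    using assms e by (auto intro: mult_left_mono)
  show "0 \<le> 1 - OU_gen \<mu> bump' bump'' y"
    using c bump_bounds[of y] by (simp add: one_minus_OU_gen_bump)
  show bound: "1 - OU_gen \<mu> bump' bump'' y \<le> 3 + 2 * \<mu>"
    using c bump_bounds[of y] by (simp add: one_minus_OU_gen_bump)
  show "1 - OU_gen \<mu> bump' bump'' y \<le> (3 + 2 * \<mu>) * y"
  proof (cases "y \<le> 1")
    case True
    then have "y\<^sup>2 \<le> y"
      using assms by (simp add: power2_eq_square mult_left_le_one_le)
    have "1 - OU_gen \<mu> bump' bump'' y \<le> (3 + 2 * \<mu>) * y\<^sup>2"
      using b c by (simp add: one_minus_OU_gen_bump algebra_simps)
    also have "\<dots> \<le> (3 + 2 * \<mu>) * y"
      using \<open>y\<^sup>2 \<le> y\<close> assms by (intro mult_left_mono) auto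
    finally show ?thesis .
  next
    case False
    then have "3 + 2 * \<mu> \<le> (3 + 2 * \<mu>) * y"
      using assms by (simp add: mult_le_cancel_left1)
    then show ?thesis
      using bound by linarith
  qed
qed

definition compensator :: "real \<Rightarrow> (real \<Rightarrow> real) \<Rightarrow> real \<Rightarrow> real" where
  "compensator \<mu> p t = integral {0..t} (\<lambda>u. 1 - OU_gen \<mu> bump' bump'' (p u))"

lemma integrable_on_comp_path:
  fixes g p :: "real \<Rightarrow> real"
  assumes "continuous_on UNIV g" "continuous_on {0..} p" "0 \<le> a"
  shows "(\<lambda>u. g (p u)) integrable_on {a..b}"
proof -
  have "continuous_on {a..b} p"
    using assms(2,3) by (auto intro: continuous_on_subset)
  then have "continuous_on {a..b} (\<lambda>u. g (p u))"
    by (metis assms(1) continuous_on_compose2 subset_UNIV)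
  then show ?thesis
    by (rule integrable_continuous_real)
qed

context
  fixes \<mu> :: real and p :: "real \<Rightarrow> real"
  assumes \<mu>: "0 \<le> \<mu>" and p_cont: "continuous_on {0..} p" and p_nonneg: "\<And>u. 0 \<le> u \<Longrightarrow> 0 \<le> p u"
begin

lemma integrable_on_OU_gen_bump_path: "(\<lambda>u. OU_gen \<mu> bump' bump'' (p u)) integrable_on {a..b}"
  if "0 \<le> a" for a b
  using continuous_on_OU_gen_bump p_cont that by (rule integrable_on_comp_path)

lemma compensator_eq:
  assumes "0 \<le> t"
  shows "compensator \<mu> p t = t - integral {0..t} (\<lambda>u. OU_gen \<mu> bump' bump'' (p u))"
  using integral_diff[OF integrable_const_ivl integrable_on_OU_gen_bump_path[where a = 0 and b = t], of 1] assms
  by (simp add: compensator_def)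

lemma compensator_increment_bounds:
  assumes "0 \<le> s" "s \<le> t"
  shows "0 \<le> compensator \<mu> p t - compensator \<mu> p s"
    and "compensator \<mu> p t - compensator \<mu> p s \<le> (3 + 2 * \<mu>) * (t - s)"
proof -
  let ?g = "\<lambda>u. 1 - OU_gen \<mu> bump' bump'' (p u)"
  have int: "?g integrable_on {a..b}" if "0 \<le> a" for a b
    using integrable_on_OU_gen_bump_path[OF that] by (intro integrable_diff integrable_const_ivl)
  have "compensator \<mu> p t - compensator \<mu> p s = integral {s..t} ?g"
    using Henstock_Kurzweil_Integration.integral_combine[OF assms int[of 0 t]]
    by (simp add: compensator_def)
  moreover have "0 \<le> integral {s..t} ?g"
    using assms by (intro integral_nonneg int one_minus_OU_gen_bump_bounds(1) \<mu> p_nonneg) auto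
  moreover have "integral {s..t} ?g \<le> integral {s..t} (\<lambda>_. 3 + 2 * \<mu>)"
    using assms by (intro integral_le int integrable_const_ivl one_minus_OU_gen_bump_bounds(2) \<mu> p_nonneg) auto
  ultimately show "0 \<le> compensator \<mu> p t - compensator \<mu> p s"
    and "compensator \<mu> p t - compensator \<mu> p s \<le> (3 + 2 * \<mu>) * (t - s)"
    using assms by (simp_all add: mult.commute)
qed

lemma compensator_le_integral: "compensator \<mu> p t \<le> (3 + 2 * \<mu>) * integral {0..t} p"
proof -
  have "compensator \<mu> p t \<le> integral {0..t} (\<lambda>u. (3 + 2 * \<mu>) * p u)"
    unfolding compensator_def
  proof (rule integral_le)
    show "(\<lambda>u. 1 - OU_gen \<mu> bump' bump'' (p u)) integrable_on {0..t}"
      using integrable_on_OU_gen_bump_path[of 0] by (intro integrable_diff integrable_const_ivl) auto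
    show "(\<lambda>u. (3 + 2 * \<mu>) * p u) integrable_on {0..t}"
      using integrable_on_cmult_left[OF integrable_on_comp_path[of id, OF _ p_cont, of 0 t]]
      by simp
  qed (use \<mu> p_nonneg one_minus_OU_gen_bump_bounds(3) in auto)
  then show ?thesis by simp
qed

end

lemma integrable_mult_bounded:
  fixes G X :: "'a \<Rightarrow> real"
  assumes "integrable M X" "G \<in> borel_measurable M" "\<And>\<omega>. \<omega> \<in> space M \<Longrightarrow> \<bar>G \<omega>\<bar> \<le> B"
  shows "integrable M (\<lambda>\<omega>. G \<omega> * X \<omega>)"
proof (rule Bochner_Integration.integrable_bound)
  show "integrable M (\<lambda>\<omega>. B * X \<omega>)"
    using assms(1) by simp
  show "AE \<omega> in M. norm (G \<omega> * X \<omega>) \<le> norm (B * X \<omega>)"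
  proof (intro AE_I2)
    fix \<omega> assume "\<omega> \<in> space M"
    then have "\<bar>G \<omega>\<bar> \<le> \<bar>B\<bar>"
      using assms(3) by fastforce
    then show "norm (G \<omega> * X \<omega>) \<le> norm (B * X \<omega>)"
      by (simp add: abs_mult mult_right_mono)
  qed
qed (use assms(1,2) in auto)

lemma (in sigma_finite_subalgebra) integral_mult_cond_exp_eq:
  fixes G X Y :: "'a \<Rightarrow> real"
  assumes "integrable M X" and "Y \<in> borel_measurable M" and "AE \<omega> in M. real_cond_exp M F X \<omega> = Y \<omega>"
    and "G \<in> borel_measurable F" and "\<And>\<omega>. \<omega> \<in> space M \<Longrightarrow> \<bar>G \<omega>\<bar> \<le> B"
  shows "(\<integral>\<omega>. G \<omega> * X \<omega> \<partial>M) = (\<integral>\<omega>. G \<omega> * Y \<omega> \<partial>M)"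
proof -
  have [measurable]: "G \<in> borel_measurable M" "real_cond_exp M F X \<in> borel_measurable M"
    using measurable_from_subalg[OF subalg assms(4)] by simp_all
  have "integrable M (\<lambda>\<omega>. G \<omega> * X \<omega>)"
    using assms(1,4,5) measurable_from_subalg[OF subalg] by (intro integrable_mult_bounded) auto
  then have "(\<integral>\<omega>. G \<omega> * X \<omega> \<partial>M) = (\<integral>\<omega>. G \<omega> * real_cond_exp M F X \<omega> \<partial>M)"
    using assms(1,4) by (simp add: real_cond_exp_intg(2))
  also have "\<dots> = (\<integral>\<omega>. G \<omega> * Y \<omega> \<partial>M)"
    using assms(2,3) by (intro integral_cong_AE) auto
  finally show ?thesis .
qed

lemma exp_neg_increment_le:
  fixes l x y B :: real
  assumes "0 \<le> l" "x \<le> y" "y - x \<le> B"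
  shows "exp (- l * y) \<le> exp (- l * x) * (1 - l * (y - x) + (l * B)\<^sup>2 / 2)"
proof -
  have lD: "0 \<le> l * (y - x)" "l * (y - x) \<le> l * B"
    using assms by (auto intro: mult_left_mono)
  have "exp (- l * y) = exp (- l * x) * exp (- (l * (y - x)))"
    by (simp add: exp_add[symmetric] algebra_simps)
  also have "\<dots> \<le> exp (- l * x) * (1 - l * (y - x) + (l * B)\<^sup>2 / 2)"
  proof (intro mult_left_mono)
    have "(l * (y - x))\<^sup>2 \<le> (l * B)\<^sup>2"
      using lD by (intro power_mono) auto
    then show "exp (- (l * (y - x))) \<le> 1 - l * (y - x) + (l * B)\<^sup>2 / 2"
      using exp_neg_le_quadratic[OF lD(1)] by linarith
  qed simp
  finally show ?thesis .
qed

lemma (in prob_space) integral_exp_neg_increment_le: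
  fixes X Y :: "'a \<Rightarrow> real" and l B :: real
  assumes [measurable]: "X \<in> borel_measurable M" "Y \<in> borel_measurable M"
    and X_nonneg: "\<And>\<omega>. \<omega> \<in> space M \<Longrightarrow> 0 \<le> X \<omega>"
    and increment: "AE \<omega> in M. 0 \<le> Y \<omega> - X \<omega> \<and> Y \<omega> - X \<omega> \<le> B"
    and l: "0 \<le> l"
    and drift: "(\<integral>\<omega>. exp (- l * X \<omega>) \<partial>M) \<le> (\<integral>\<omega>. exp (- l * X \<omega>) * (Y \<omega> - X \<omega>) \<partial>M)"
  shows "(\<integral>\<omega>. exp (- l * Y \<omega>) \<partial>M) \<le> (1 - l + (l * B)\<^sup>2 / 2) * (\<integral>\<omega>. exp (- l * X \<omega>) \<partial>M)"
proof -
  define G where "G \<omega> = exp (- l * X \<omega>)" for \<omega>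
  define D where "D \<omega> = Y \<omega> - X \<omega>" for \<omega>
  have [measurable]: "G \<in> borel_measurable M" "D \<in> borel_measurable M"
    unfolding G_def D_def by measurable
  have G_bounds: "0 < G \<omega>" "G \<omega> \<le> 1" if "\<omega> \<in> space M" for \<omega>
    using X_nonneg[OF that] l by (auto simp: G_def mult_nonneg_nonneg)
  have bounds: "AE \<omega> in M. norm (G \<omega>) \<le> 1 \<and> norm (G \<omega> * D \<omega>) \<le> B \<and> norm (exp (- l * Y \<omega>)) \<le> 1"
    using increment AE_space
  proof eventually_elim
    case (elim \<omega>)
    then have "G \<omega> * D \<omega> \<le> D \<omega>"
      using G_bounds[OF elim(2)] by (intro mult_left_le_one_le) (auto simp: D_def)
    then show ?case
      using elim G_bounds[OF elim(2)] X_nonneg[OF elim(2)] l by (simp add: D_def abs_mult mult_nonneg_nonneg)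
  qed
  have int_G: "integrable M G"
    using bounds by (intro integrable_const_bound[where B = 1]) (auto elim: eventually_mono)
  have int_GD: "integrable M (\<lambda>\<omega>. G \<omega> * D \<omega>)"
    using bounds by (intro integrable_const_bound[where B = B]) (auto elim: eventually_mono)
  have int_Y: "integrable M (\<lambda>\<omega>. exp (- l * Y \<omega>))"
    using bounds by (intro integrable_const_bound[where B = 1]) (auto elim: eventually_mono simp del: exp_le_one_iff)
  have "AE \<omega> in M. exp (- l * Y \<omega>) \<le> (1 + (l * B)\<^sup>2 / 2) * G \<omega> - l * (G \<omega> * D \<omega>)"
    using increment
    by (rule eventually_mono) (use exp_neg_increment_le l in \<open>force simp: G_def D_def algebra_simps\<close>)
  then have "(\<integral>\<omega>. exp (- l * Y \<omega>) \<partial>M) \<le> (\<integral>\<omega>. (1 + (l * B)\<^sup>2 / 2) * G \<omega> - l * (G \<omega> * D \<omega>) \<partial>M)"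
    using int_Y int_G int_GD by (intro integral_mono_AE) auto
  also have "\<dots> = (1 + (l * B)\<^sup>2 / 2) * (\<integral>\<omega>. G \<omega> \<partial>M) - l * (\<integral>\<omega>. G \<omega> * D \<omega> \<partial>M)"
    using int_G int_GD by simp
  also have "\<dots> \<le> (1 - l + (l * B)\<^sup>2 / 2) * (\<integral>\<omega>. G \<omega> \<partial>M)"
    using mult_left_mono[OF drift l] by (simp add: G_def D_def algebra_simps)
  finally show ?thesis
    by (simp add: G_def)
qed

lemma ennreal_square_le_suminf_tail_of_below:
  fixes t :: ennreal and h :: real
  assumes below: "\<And>n. n < k \<Longrightarrow> ennreal (h * real n) < t"
  shows "ennreal ((h * real k)\<^sup>2) \<le> (\<Sum>n. ennreal (h\<^sup>2 * (2 * real n + 1)) * indicator {ennreal (h * real n)<..} t)"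
proof -
  have "(h * real k)\<^sup>2 = (\<Sum>n<k. h\<^sup>2 * (2 * real n + 1))"
    by (simp add: sum_distrib_left[symmetric] sum_odd_eq_square power_mult_distrib)
  then have "ennreal ((h * real k)\<^sup>2) = (\<Sum>n<k. ennreal (h\<^sup>2 * (2 * real n + 1)))"
    by (simp add: sum_ennreal)
  also have "\<dots> = (\<Sum>n<k. ennreal (h\<^sup>2 * (2 * real n + 1)) * indicator {ennreal (h * real n)<..} t)"
    using below by (intro sum.cong) auto
  also have "\<dots> \<le> (\<Sum>n. ennreal (h\<^sup>2 * (2 * real n + 1)) * indicator {ennreal (h * real n)<..} t)"
    by (rule sum_le_suminf) auto
  finally show ?thesis .
qed

lemma ennreal_eq_top_of_square_lower_bounds:
  fixes x :: ennreal and h :: real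
  assumes h: "0 < h" and lower: "\<And>k :: nat. ennreal ((h * real k)\<^sup>2) \<le> x"
  shows "x = \<top>"
proof (rule ccontr)
  assume "x \<noteq> \<top>"
  then obtain s where s: "x = ennreal s" "0 \<le> s"
    by (cases x) auto
  obtain k :: nat where k: "s / h\<^sup>2 < real k"
    using reals_Archimedean2 by blast
  then have "s < h\<^sup>2 * real k"
    using h by (simp add: pos_divide_less_eq mult.commute)
  also have "\<dots> \<le> h\<^sup>2 * (real k)\<^sup>2"
    by (intro mult_left_mono) (cases k, auto simp: power2_eq_square)
  also have "\<dots> = (h * real k)\<^sup>2"
    by (simp add: power_mult_distrib)
  also have "\<dots> \<le> s"
    using lower[of k] s by (simp add: ennreal_le_iff)
  finally show False
    by simp
qed

lemma ennreal_square_le_suminf_tail: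
  fixes t :: ennreal and h :: real
  assumes h: "0 < h"
  shows "t\<^sup>2 \<le> (\<Sum>n. ennreal (h\<^sup>2 * (2 * real n + 1)) * indicator {ennreal (h * real n)<..} t)"
    (is "_ \<le> ?S")
proof (cases t)
  case (real r)
  define k where "k = nat \<lceil>r / h\<rceil>"
  have "ennreal (h * real n) < t" if "n < k" for n
  proof -
    have "real n < r / h"
      using that by (metis k_def less_ceiling_iff of_int_of_nat_eq zless_nat_eq_int_zless)
    then have "h * real n < r"
      using h by (simp add: pos_less_divide_eq mult.commute)
    then show ?thesis
      using real h by (simp add: ennreal_less_iff)
  qed
  then have "ennreal ((h * real k)\<^sup>2) \<le> ?S"
    by (rule ennreal_square_le_suminf_tail_of_below)
  moreover have "r \<le> h * real k"
  proof -
    have "r / h \<le> real k"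
      using h real le_of_int_ceiling[of "r / h"] by (simp add: k_def)
    then show ?thesis
      using h by (simp add: pos_divide_le_eq mult.commute)
  qed
  then have "t\<^sup>2 \<le> ennreal ((h * real k)\<^sup>2)"
    using real by (auto simp: ennreal_power intro!: power_mono)
  ultimately show ?thesis
    by order
next
  case top
  then have "ennreal ((h * real k)\<^sup>2) \<le> ?S" for k
    by (intro ennreal_square_le_suminf_tail_of_below) simp
  then have "?S = \<top>"
    using h by (intro ennreal_eq_top_of_square_lower_bounds)
  then show ?thesis
    by simp
qed

lemma nn_integral_square_lt_top_of_geometric_tails:
  fixes T :: "'a \<Rightarrow> ennreal" and J :: "nat \<Rightarrow> 'a \<Rightarrow> ennreal"
  assumes J_measurable [measurable]: "\<And>n. J n \<in> borel_measurable M"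
    and tail: "AE \<omega> in M. \<forall>n. ennreal (h * real n) < T \<omega> \<longrightarrow> 1 \<le> J n \<omega>"
    and J_integral: "\<And>n. (\<integral>\<^sup>+\<omega>. J n \<omega> \<partial>M) \<le> ennreal (c * r ^ n)"
    and "0 < h" "0 \<le> c" "0 \<le> r" "r < 1"
  shows "(\<integral>\<^sup>+\<omega>. (T \<omega>)\<^sup>2 \<partial>M) < \<infinity>"
proof -
  let ?w = "\<lambda>n. h\<^sup>2 * (2 * real n + 1)"
  have "AE \<omega> in M. (T \<omega>)\<^sup>2 \<le> (\<Sum>n. ennreal (?w n) * J n \<omega>)"
    using tail
  proof eventually_elim
    case (elim \<omega>)
    have "(T \<omega>)\<^sup>2 \<le> (\<Sum>n. ennreal (?w n) * indicator {ennreal (h * real n)<..} (T \<omega>))"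
      using \<open>0 < h\<close> by (rule ennreal_square_le_suminf_tail)
    also have "\<dots> \<le> (\<Sum>n. ennreal (?w n) * J n \<omega>)"
      using elim by (intro suminf_le mult_left_mono) (auto split: split_indicator)
    finally show ?case .
  qed
  then have "(\<integral>\<^sup>+\<omega>. (T \<omega>)\<^sup>2 \<partial>M) \<le> (\<integral>\<^sup>+\<omega>. (\<Sum>n. ennreal (?w n) * J n \<omega>) \<partial>M)"
    by (rule nn_integral_mono_AE)
  also have "\<dots> = (\<Sum>n. ennreal (?w n) * (\<integral>\<^sup>+\<omega>. J n \<omega> \<partial>M))"
    by (simp add: nn_integral_suminf nn_integral_cmult)
  also have "\<dots> \<le> (\<Sum>n. ennreal (?w n * (c * r ^ n)))"
    using J_integral \<open>0 < h\<close> by (intro suminf_le) (auto simp: ennreal_mult' intro: mult_left_mono)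
  also have "\<dots> < \<infinity>"
  proof -
    have "summable (\<lambda>n. h\<^sup>2 * c * ((2 * real n + 1) * r ^ n))"
      using summable_odd_mult_geometric assms(6,7) by (intro summable_mult)
    moreover have "0 \<le> h\<^sup>2 * c * ((2 * real n + 1) * r ^ n)" for n
      using assms(5,6) by simp
    ultimately show ?thesis
      using ennreal_suminf_neq_top by (simp add: less_top[symmetric] algebra_simps)
  qed
  finally show ?thesis .
qed

lemma less_kill_time_imp_integral_less:
  assumes "0 < t" and "ennreal t < kill_time \<gamma> Z \<xi> \<omega>"
  shows "\<gamma> * integral {0..t} (\<lambda>s. Z s \<omega>) < \<xi> \<omega>"
proof (rule ccontr)
  assume "\<not> \<gamma> * integral {0..t} (\<lambda>s. Z s \<omega>) < \<xi> \<omega>"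
  then have "kill_time \<gamma> Z \<xi> \<omega> \<le> ennreal t"
    unfolding kill_time_def using assms(1) by (intro Inf_lower imageI) auto
  with assms(2) show False
    by simp
qed

locale reflecting_OU_space = prob_space M for M :: "'a measure" +
  fixes F :: "real \<Rightarrow> 'a measure" and \<mu> x :: real and Z :: "real \<Rightarrow> 'a \<Rightarrow> real"
  assumes \<mu>_pos: "0 < \<mu>" and OU: "reflecting_OU M F \<mu> x Z"
begin

lemma sigma_finite_subalgebra_F: "0 \<le> t \<Longrightarrow> sigma_finite_subalgebra M (F t)"
  using OU unfolding reflecting_OU_def filtration_on_def by blast

lemma space_F: "0 \<le> t \<Longrightarrow> space (F t) = space M"
  using sigma_finite_subalgebra_F[of t] unfolding sigma_finite_subalgebra_def subalgebra_def by blast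

lemma subalgebra_F: "0 \<le> s \<Longrightarrow> s \<le> t \<Longrightarrow> subalgebra (F t) (F s)"
  using OU space_F[of s] space_F[of t] unfolding reflecting_OU_def filtration_on_def subalgebra_def
  by auto

lemma measurable_F_mono: "0 \<le> s \<Longrightarrow> s \<le> t \<Longrightarrow> f \<in> borel_measurable (F s) \<Longrightarrow> f \<in> borel_measurable (F t)"
  using measurable_from_subalg[OF subalgebra_F] by blast

lemma measurable_F_M: "0 \<le> t \<Longrightarrow> f \<in> borel_measurable (F t) \<Longrightarrow> f \<in> borel_measurable M"
  using sigma_finite_subalgebra_F[of t] unfolding sigma_finite_subalgebra_def
  by (blast intro: measurable_from_subalg)

lemma Z_measurable_F: "0 \<le> s \<Longrightarrow> s \<le> t \<Longrightarrow> Z s \<in> borel_measurable (F t)"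
  using OU measurable_F_mono[where s = s and t = t] unfolding reflecting_OU_def by blast

lemma Z_measurable: "0 \<le> t \<Longrightarrow> Z t \<in> borel_measurable M"
  using Z_measurable_F measurable_F_M by blast

lemma continuous_on_path: "\<omega> \<in> space M \<Longrightarrow> continuous_on {0..} (\<lambda>t. Z t \<omega>)"
  and path_nonneg: "\<omega> \<in> space M \<Longrightarrow> 0 \<le> u \<Longrightarrow> 0 \<le> Z u \<omega>"
  using OU unfolding reflecting_OU_def by blast+

definition mart :: "real \<Rightarrow> 'a \<Rightarrow> real" where
  "mart t \<omega> = bump (Z t \<omega>) - bump (Z 0 \<omega>) - integral {0..t} (\<lambda>s. OU_gen \<mu> bump' bump'' (Z s \<omega>))"

lemma martingale_mart:
  "\<forall>t\<ge>0. integrable M (mart t) \<and>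
     (\<forall>s. 0 \<le> s \<longrightarrow> s \<le> t \<longrightarrow> (AE \<omega> in M. real_cond_exp M (F s) (mart t) \<omega> = mart s \<omega>))"
  using OU Cb2_neumann_bump unfolding reflecting_OU_def Let_def mart_def[abs_def] by blast

lemma integrable_mart: "0 \<le> t \<Longrightarrow> integrable M (mart t)"
  and cond_exp_mart: "0 \<le> s \<Longrightarrow> s \<le> t \<Longrightarrow> AE \<omega> in M. real_cond_exp M (F s) (mart t) \<omega> = mart s \<omega>"
  using martingale_mart by auto

lemma compensator_path_eq:
  assumes "\<omega> \<in> space M" "0 \<le> t"
  shows "compensator \<mu> (\<lambda>u. Z u \<omega>) t = t - bump (Z t \<omega>) + bump (Z 0 \<omega>) + mart t \<omega>"
  using compensator_eq[of \<mu> "\<lambda>u. Z u \<omega>"] \<mu>_pos continuous_on_path path_nonneg assms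
  by (simp add: mart_def)

text \<open>The pathwise compensator is not known to be measurable in \<open>\<omega>\<close>; \<open>C t\<close> is an
  \<open>F t\<close>-measurable version of it, with the martingale replaced by its conditional expectation
  and \<open>max 0\<close> making it nonnegative everywhere rather than almost surely.\<close>
definition C :: "real \<Rightarrow> 'a \<Rightarrow> real" where
  "C t \<omega> = max 0 (t - bump (Z t \<omega>) + bump (Z 0 \<omega>) + real_cond_exp M (F t) (mart t) \<omega>)"

lemma C_nonneg: "0 \<le> C t \<omega>"
  by (simp add: C_def)

lemma C_measurable_F: "0 \<le> t \<Longrightarrow> C t \<in> borel_measurable (F t)"
  using Z_measurable_F[of t t] Z_measurable_F[of 0 t] unfolding C_def by measurable

lemma C_measurable: "0 \<le> t \<Longrightarrow> C t \<in> borel_measurable M"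
  using C_measurable_F measurable_F_M by blast

lemma AE_C_eq_compensator:
  assumes "0 \<le> t"
  shows "AE \<omega> in M. C t \<omega> = compensator \<mu> (\<lambda>u. Z u \<omega>) t"
  using cond_exp_mart[OF assms order_refl] AE_space
proof eventually_elim
  case (elim \<omega>)
  have "0 \<le> compensator \<mu> (\<lambda>u. Z u \<omega>) t"
    using compensator_increment_bounds(1)[of \<mu> "\<lambda>u. Z u \<omega>" 0 t] \<mu>_pos assms
      continuous_on_path[OF elim(2)] path_nonneg[OF elim(2)]
    by (simp add: compensator_def)
  then show ?case
    using compensator_path_eq[OF elim(2) assms] elim(1) by (simp add: C_def)
qed

lemma AE_C_increment:
  assumes "0 \<le> s" "s \<le> t"
  shows "AE \<omega> in M. C t \<omega> - C s \<omega> = (t - s) - bump (Z t \<omega>) + bump (Z s \<omega>) + (mart t \<omega> - mart s \<omega>)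
    \<and> 0 \<le> C t \<omega> - C s \<omega> \<and> C t \<omega> - C s \<omega> \<le> (3 + 2 * \<mu>) * (t - s)"
  using AE_C_eq_compensator[OF assms(1)] AE_C_eq_compensator[OF order_trans[OF assms]] AE_space
proof eventually_elim
  case (elim \<omega>)
  then show ?case
    using assms compensator_path_eq[OF elim(3), of s] compensator_path_eq[OF elim(3), of t]
      compensator_increment_bounds[of \<mu> "\<lambda>u. Z u \<omega>" s t] \<mu>_pos
      continuous_on_path[OF elim(3)] path_nonneg[OF elim(3)]
    by auto
qed

lemma integral_mult_mart_eq:
  fixes G :: "'a \<Rightarrow> real"
  assumes st: "0 \<le> s" "s \<le> t"
    and G: "G \<in> borel_measurable (F s)" and G_bound: "\<And>\<omega>. \<omega> \<in> space M \<Longrightarrow> \<bar>G \<omega>\<bar> \<le> 1"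
  shows "(\<integral>\<omega>. G \<omega> * mart t \<omega> \<partial>M) = (\<integral>\<omega>. G \<omega> * mart s \<omega> \<partial>M)"
proof -
  interpret S: sigma_finite_subalgebra M "F s"
    using sigma_finite_subalgebra_F st(1) .
  show ?thesis
    using integrable_mart[of t] integrable_mart[of s] cond_exp_mart[OF st] G_bound st
    by (intro S.integral_mult_cond_exp_eq G) auto
qed

lemma integral_mult_C_increment_ge:
  fixes G :: "'a \<Rightarrow> real"
  assumes st: "0 \<le> s" "s \<le> t"
    and G: "G \<in> borel_measurable (F s)"
    and G_bounds: "\<And>\<omega>. \<omega> \<in> space M \<Longrightarrow> 0 \<le> G \<omega> \<and> G \<omega> \<le> 1"
  shows "(t - s - 1) * (\<integral>\<omega>. G \<omega> \<partial>M) \<le> (\<integral>\<omega>. G \<omega> * (C t \<omega> - C s \<omega>) \<partial>M)"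
proof -
  define W where "W \<omega> = (t - s) - bump (Z t \<omega>) + bump (Z s \<omega>)" for \<omega>
  have [measurable]: "Z s \<in> borel_measurable M" "Z t \<in> borel_measurable M"
    using st by (auto intro: Z_measurable)
  have [measurable]: "G \<in> borel_measurable M" "W \<in> borel_measurable M"
    using measurable_F_M[OF st(1) G] unfolding W_def by measurable
  have [measurable]: "mart s \<in> borel_measurable M" "mart t \<in> borel_measurable M"
    "C s \<in> borel_measurable M" "C t \<in> borel_measurable M"
    using st integrable_mart[of s] integrable_mart[of t] C_measurable[of s] C_measurable[of t] by auto
  have G_abs: "\<bar>G \<omega>\<bar> \<le> 1" if "\<omega> \<in> space M" for \<omega>
    using G_bounds[OF that] by simp
  have W_bounds: "t - s - 1 \<le> W \<omega>" "\<bar>W \<omega>\<bar> \<le> \<bar>t - s\<bar> + 1" for \<omega>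
    using bump_bounds[of "Z t \<omega>"] bump_bounds[of "Z s \<omega>"] by (auto simp: W_def)
  have int_W: "integrable M W"
    using W_bounds(2) by (intro integrable_const_bound[where B = "\<bar>t - s\<bar> + 1"]) auto
  have int_G: "integrable M G"
    using G_abs by (intro integrable_const_bound[where B = 1] AE_I2) auto
  have int_mart: "integrable M (\<lambda>\<omega>. G \<omega> * mart u \<omega>)" if "0 \<le> u" for u
    using integrable_mart[OF that] G_abs by (intro integrable_mult_bounded) auto
  have "(t - s - 1) * (\<integral>\<omega>. G \<omega> \<partial>M) \<le> (\<integral>\<omega>. G \<omega> * W \<omega> \<partial>M)"
    using int_G int_W G_abs G_bounds W_bounds(1)
    by (subst integral_mult_right_zero[symmetric])
       (intro integral_mono integrable_mult_bounded, auto simp: mult.commute intro: mult_left_mono)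
  also have "\<dots> = (\<integral>\<omega>. G \<omega> * W \<omega> \<partial>M) + ((\<integral>\<omega>. G \<omega> * mart t \<omega> \<partial>M) - (\<integral>\<omega>. G \<omega> * mart s \<omega> \<partial>M))"
    using integral_mult_mart_eq[OF st G G_abs] by simp
  also have "\<dots> = (\<integral>\<omega>. G \<omega> * W \<omega> + (G \<omega> * mart t \<omega> - G \<omega> * mart s \<omega>) \<partial>M)"
    using int_mart[of t] int_mart[of s] integrable_mult_bounded[OF int_W _ G_abs] st by simp
  also have "\<dots> = (\<integral>\<omega>. G \<omega> * (C t \<omega> - C s \<omega>) \<partial>M)"
  proof (rule integral_cong_AE)
    show "AE \<omega> in M. G \<omega> * W \<omega> + (G \<omega> * mart t \<omega> - G \<omega> * mart s \<omega>) = G \<omega> * (C t \<omega> - C s \<omega>)"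
      using AE_C_increment[OF st]
    proof eventually_elim
      case (elim \<omega>)
      then have "C t \<omega> - C s \<omega> = W \<omega> + (mart t \<omega> - mart s \<omega>)"
        by (simp add: W_def)
      then show ?case
        by (simp add: distrib_left right_diff_distrib)
    qed
  qed measurable
  finally show ?thesis .
qed

definition K :: real where "K = 3 + 2 * \<mu>"
definition lam :: real where "lam = 1 / (4 * K\<^sup>2)"
definition rho :: real where "rho = 1 - 1 / (8 * K\<^sup>2)"

lemma K_ge_3: "3 \<le> K"
  using \<mu>_pos by (simp add: K_def)

lemma lam_pos: "0 < lam"
  using K_ge_3 by (simp add: lam_def)

lemma rho_bounds: "0 < rho" "rho < 1"
proof -
  have "9 \<le> K\<^sup>2"
    using power_mono[OF K_ge_3, of 2] by simp
  then have "0 < 1 / (8 * K\<^sup>2)" "1 / (8 * K\<^sup>2) < 1"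
    using K_ge_3 by (simp_all add: divide_less_eq)
  then show "0 < rho" "rho < 1"
    by (simp_all add: rho_def)
qed

lemma rho_eq: "rho = 1 - lam + (lam * (2 * K))\<^sup>2 / 2"
  using K_ge_3 by (simp add: rho_def lam_def field_simps power2_eq_square)

lemma integrable_exp_neg_C: "0 \<le> t \<Longrightarrow> integrable M (\<lambda>\<omega>. exp (- lam * C t \<omega>))"
  using C_measurable[of t] lam_pos C_nonneg
  by (intro integrable_const_bound[where B = 1]) (auto simp: mult_nonneg_nonneg)

lemma decay_step:
  assumes "0 \<le> s"
  shows "(\<integral>\<omega>. exp (- lam * C (s + 2) \<omega>) \<partial>M) \<le> rho * (\<integral>\<omega>. exp (- lam * C s \<omega>) \<partial>M)"
  unfolding rho_eq
proof (rule integral_exp_neg_increment_le)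
  show "C s \<in> borel_measurable M" "C (s + 2) \<in> borel_measurable M"
    using assms by (auto intro: C_measurable)
  show "AE \<omega> in M. 0 \<le> C (s + 2) \<omega> - C s \<omega> \<and> C (s + 2) \<omega> - C s \<omega> \<le> 2 * K"
    using AE_C_increment[of s "s + 2"] assms
    by (auto simp: K_def mult.commute elim!: AE_mp intro!: AE_I2)
  have "((s + 2) - s - 1) * (\<integral>\<omega>. exp (- lam * C s \<omega>) \<partial>M)
      \<le> (\<integral>\<omega>. exp (- lam * C s \<omega>) * (C (s + 2) \<omega> - C s \<omega>) \<partial>M)"
    using assms C_measurable_F[OF assms] lam_pos C_nonneg
    by (intro integral_mult_C_increment_ge) (auto simp: mult_nonneg_nonneg)
  then show "(\<integral>\<omega>. exp (- lam * C s \<omega>) \<partial>M) \<le> (\<integral>\<omega>. exp (- lam * C s \<omega>) * (C (s + 2) \<omega> - C s \<omega>) \<partial>M)"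
    by simp
qed (use C_nonneg lam_pos in auto)

lemma decay: "(\<integral>\<omega>. exp (- lam * C (2 * real n) \<omega>) \<partial>M) \<le> rho ^ n"
proof (induction n)
  case 0
  have "(\<integral>\<omega>. exp (- lam * C 0 \<omega>) \<partial>M) \<le> (\<integral>\<omega>. 1 \<partial>M)"
    using integrable_exp_neg_C[of 0] lam_pos C_nonneg
    by (intro integral_mono) (auto simp: mult_nonneg_nonneg)
  then show ?case
    by (simp add: prob_space)
next
  case (Suc n)
  have "(\<integral>\<omega>. exp (- lam * C (2 * real (Suc n)) \<omega>) \<partial>M) = (\<integral>\<omega>. exp (- lam * C (2 * real n + 2) \<omega>) \<partial>M)"
    by (simp add: algebra_simps)
  also have "\<dots> \<le> rho * (\<integral>\<omega>. exp (- lam * C (2 * real n) \<omega>) \<partial>M)"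
    by (rule decay_step) simp
  also have "\<dots> \<le> rho * rho ^ n"
    using Suc rho_bounds by (intro mult_left_mono) auto
  finally show ?case
    by simp
qed

end

locale killed_reflecting_OU = reflecting_OU_space +
  fixes \<gamma> :: real and \<xi> :: "'a \<Rightarrow> real"
  assumes \<gamma>_pos: "0 < \<gamma>" and \<xi>_exponential: "distributed M lborel \<xi> (exponential_density 1)"
begin

lemma \<xi>_measurable [measurable]: "\<xi> \<in> borel_measurable M"
  using distributed_measurable[OF \<xi>_exponential] by simp

text \<open>The scale \<open>a\<close> is chosen so that \<open>exp (lam * K * a * n) * rho ^ n = exp (ln rho / 2) ^ n\<close>.\<close>
definition a :: real where "a = - ln rho / (2 * lam * K)"

lemma a_pos: "0 < a"
proof -
  have "ln rho < 0" "0 < 2 * lam * K"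
    using rho_bounds lam_pos K_ge_3 by simp_all
  then show ?thesis
    by (simp add: a_def divide_neg_pos)
qed

lemma lam_K_a: "lam * K * a = - ln rho / 2"
  using lam_pos K_ge_3 by (simp add: a_def field_simps)

definition tail_bound :: "nat \<Rightarrow> 'a \<Rightarrow> ennreal" where
  "tail_bound n \<omega> = indicator {\<omega> \<in> space M. \<gamma> * a * real n < \<xi> \<omega>} \<omega>
     + ennreal (exp (lam * K * a * real n) * exp (- lam * C (2 * real n) \<omega>))"

lemma tail_bound_measurable [measurable]: "tail_bound n \<in> borel_measurable M"
  using C_measurable[of "2 * real n"] unfolding tail_bound_def by measurable

lemma integral_path_le_of_less_kill_time:
  assumes "ennreal (2 * real n) < kill_time \<gamma> Z \<xi> \<omega>" and "\<not> \<gamma> * a * real n < \<xi> \<omega>"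
  shows "integral {0..2 * real n} (\<lambda>s. Z s \<omega>) \<le> a * real n"
proof (cases "n = 0")
  case False
  then have "\<gamma> * integral {0..2 * real n} (\<lambda>s. Z s \<omega>) < \<xi> \<omega>"
    using assms(1) by (intro less_kill_time_imp_integral_less) auto
  then have "\<gamma> * integral {0..2 * real n} (\<lambda>s. Z s \<omega>) < \<gamma> * (a * real n)"
    using assms(2) by (simp add: mult.assoc)
  then show ?thesis
    using \<gamma>_pos by simp
qed simp

lemma one_le_tail_bound:
  assumes \<omega>: "\<omega> \<in> space M" and C_eq: "C (2 * real n) \<omega> = compensator \<mu> (\<lambda>u. Z u \<omega>) (2 * real n)"
    and killed_late: "ennreal (2 * real n) < kill_time \<gamma> Z \<xi> \<omega>"
  shows "1 \<le> tail_bound n \<omega>"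
proof (cases "\<gamma> * a * real n < \<xi> \<omega>")
  case True
  then show ?thesis
    using \<omega> by (simp add: tail_bound_def)
next
  case False
  have "C (2 * real n) \<omega> \<le> K * integral {0..2 * real n} (\<lambda>s. Z s \<omega>)"
    using C_eq compensator_le_integral[of \<mu> "\<lambda>u. Z u \<omega>" "2 * real n"] \<mu>_pos
      continuous_on_path[OF \<omega>] path_nonneg[OF \<omega>]
    by (simp add: K_def)
  also have "\<dots> \<le> K * (a * real n)"
    using integral_path_le_of_less_kill_time[OF killed_late False] K_ge_3 by (intro mult_left_mono) auto
  finally have "0 \<le> lam * (K * a * real n - C (2 * real n) \<omega>)"
    using lam_pos by (intro mult_nonneg_nonneg) auto
  then have "1 \<le> exp (lam * K * a * real n) * exp (- lam * C (2 * real n) \<omega>)"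
    by (simp add: exp_add[symmetric] algebra_simps)
  then show ?thesis
    by (simp add: tail_bound_def ennreal_le_iff2 add_increasing)
qed

lemma AE_one_le_tail_bound:
  "AE \<omega> in M. \<forall>n. ennreal (2 * real n) < kill_time \<gamma> Z \<xi> \<omega> \<longrightarrow> 1 \<le> tail_bound n \<omega>"
  unfolding AE_all_countable
proof
  fix n :: nat
  have "AE \<omega> in M. C (2 * real n) \<omega> = compensator \<mu> (\<lambda>u. Z u \<omega>) (2 * real n)"
    by (rule AE_C_eq_compensator) simp
  then show "AE \<omega> in M. ennreal (2 * real n) < kill_time \<gamma> Z \<xi> \<omega> \<longrightarrow> 1 \<le> tail_bound n \<omega>"
    using AE_space by eventually_elim (auto intro: one_le_tail_bound)
qed

lemma exp_lam_K_a_mult_rho_power: "exp (lam * K * a * real n) * rho ^ n = exp (ln rho / 2) ^ n"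
proof -
  have "exp (lam * K * a * real n) = exp (- ln rho / 2) ^ n"
    by (simp only: lam_K_a[symmetric] exp_of_nat_mult[symmetric]) (simp add: ac_simps)
  moreover have "rho ^ n = exp (ln rho) ^ n"
    using rho_bounds by simp
  ultimately have "exp (lam * K * a * real n) * rho ^ n = (exp (- ln rho / 2) * exp (ln rho)) ^ n"
    by (simp add: power_mult_distrib)
  also have "\<dots> = exp (ln rho / 2) ^ n"
    by (simp flip: exp_add)
  finally show ?thesis .
qed

lemma nn_integral_tail_bound:
  "(\<integral>\<^sup>+\<omega>. tail_bound n \<omega> \<partial>M) \<le> ennreal (exp (- \<gamma> * a) ^ n + exp (ln rho / 2) ^ n)"
proof -
  have [measurable]: "C (2 * real n) \<in> borel_measurable M"
    by (simp add: C_measurable)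
  have "(\<integral>\<^sup>+\<omega>. tail_bound n \<omega> \<partial>M)
      = (\<integral>\<^sup>+\<omega>. indicator {\<omega> \<in> space M. \<gamma> * a * real n < \<xi> \<omega>} \<omega> \<partial>M)
        + (\<integral>\<^sup>+\<omega>. ennreal (exp (lam * K * a * real n) * exp (- lam * C (2 * real n) \<omega>)) \<partial>M)"
    unfolding tail_bound_def by (rule nn_integral_add) measurable
  also have "(\<integral>\<^sup>+\<omega>. indicator {\<omega> \<in> space M. \<gamma> * a * real n < \<xi> \<omega>} \<omega> \<partial>M)
      = emeasure M {\<omega> \<in> space M. \<gamma> * a * real n < \<xi> \<omega>}"
    by (rule nn_integral_indicator) measurable
  also have "emeasure M {\<omega> \<in> space M. \<gamma> * a * real n < \<xi> \<omega>} = ennreal (exp (- \<gamma> * a) ^ n)"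
    using exponential_distributedD_gt[OF \<xi>_exponential, of "\<gamma> * a * real n"] \<gamma>_pos a_pos
    by (simp add: emeasure_eq_measure exp_of_nat_mult[symmetric] algebra_simps)
  also have "(\<integral>\<^sup>+\<omega>. ennreal (exp (lam * K * a * real n) * exp (- lam * C (2 * real n) \<omega>)) \<partial>M)
      = ennreal (exp (lam * K * a * real n) * (\<integral>\<omega>. exp (- lam * C (2 * real n) \<omega>) \<partial>M))"
    using integrable_exp_neg_C[of "2 * real n"] by (subst nn_integral_eq_integral) auto
  finally have "(\<integral>\<^sup>+\<omega>. tail_bound n \<omega> \<partial>M) = ennreal (exp (- \<gamma> * a) ^ n)
      + ennreal (exp (lam * K * a * real n) * (\<integral>\<omega>. exp (- lam * C (2 * real n) \<omega>) \<partial>M))" .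
  moreover have "exp (lam * K * a * real n) * (\<integral>\<omega>. exp (- lam * C (2 * real n) \<omega>) \<partial>M) \<le> exp (ln rho / 2) ^ n"
    using decay[of n] by (simp flip: exp_lam_K_a_mult_rho_power)
  ultimately show ?thesis
    by (metis ennreal_leI ennreal_plus add_left_mono exp_ge_zero zero_le_power)
qed

lemma nn_integral_kill_time_square_lt_top: "(\<integral>\<^sup>+\<omega>. (kill_time \<gamma> Z \<xi> \<omega>)\<^sup>2 \<partial>M) < \<infinity>"
proof (rule nn_integral_square_lt_top_of_geometric_tails)
  let ?r = "max (exp (- \<gamma> * a)) (exp (ln rho / 2))"
  show "(\<integral>\<^sup>+\<omega>. tail_bound n \<omega> \<partial>M) \<le> ennreal (2 * ?r ^ n)" for n
  proof -
    have "exp (- \<gamma> * a) ^ n \<le> ?r ^ n" "exp (ln rho / 2) ^ n \<le> ?r ^ n"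
      by (simp_all add: power_mono)
    then have "ennreal (exp (- \<gamma> * a) ^ n + exp (ln rho / 2) ^ n) \<le> ennreal (2 * ?r ^ n)"
      by (intro ennreal_leI) simp
    with nn_integral_tail_bound[of n] show ?thesis
      by (rule order_trans)
  qed
  show "?r < 1"
    using \<gamma>_pos a_pos rho_bounds by simp
qed (use AE_one_le_tail_bound in \<open>auto simp: le_max_iff_disj\<close>)

end

theorem lemma3p11:
  fixes M :: "'a measure" and F :: "real \<Rightarrow> 'a measure"
    and Z :: "real \<Rightarrow> 'a \<Rightarrow> real" and \<xi> :: "'a \<Rightarrow> real"
    and \<mu> \<gamma> x :: real
  assumes "prob_space M"
    and "\<mu> > 0" and "\<gamma> > 0" and "x \<ge> 0"
    and "reflecting_OU M F \<mu> x Z"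
    and "distributed M lborel \<xi> (exponential_density 1)"
    and "prob_space.indep_set M (sets (vimage_algebra (space M) \<xi> borel))
           (sets (vimage_algebra (space M) (\<lambda>\<omega>. restrict (\<lambda>t. Z t \<omega>) {0..}) (Pi\<^sub>M {0..} (\<lambda>_. borel))))"
  shows "(\<integral>\<^sup>+ \<omega>. (kill_time \<gamma> Z \<xi> \<omega>)\<^sup>2 \<partial>M) < \<infinity>"
proof -
  interpret killed_reflecting_OU M F \<mu> x Z \<gamma> \<xi>
    using assms(1,2,3,5,6)
    by (simp add: killed_reflecting_OU_def killed_reflecting_OU_axioms_def
        reflecting_OU_space_def reflecting_OU_space_axioms_def)
  show ?thesis
    by (rule nn_integral_kill_time_square_lt_top)
qed

end
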